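(* For every integer $d\ge1$ there exists a well-typed CorePolyC program $p$ with one input, whose program text has length $O(d\log d)$, such that $\mathrm{sz}([\![p]\!](v))=d\cdot\mathrm{sz}(v)^d$ for every $v\in\mathbb Z$.
   Context: CorePolyC. Types are $\mathtt{iint},\mathtt{int},\mathtt{bool}$; $\mathsf{Int}=\{\mathtt{iint},\mathtt{int}\}$, ordered by $\mathtt{iint}\preccurlyeq\mathtt{int}$. Values are unbounded integers ($\mathbb Z$) and booleans $\#t,\#f$. Expressions: variables $x$; constants (nonempty decimal digit strings denoting natural numbers; $\mathtt{true}$, $\mathtt{false}$); operator applications $\mathtt{op}(e_1,\dots,e_m)$; parenthesized $(e)$. Operators and semantics: unary $-$ (negation); binary $+,-,/,\%$ (integer addition, subtraction, division, remainder, with division and remainder by $0$ returning $0$); $\mathtt{size}$, with $\mathtt{size}(v)=\lceil\log_2(\mathrm{abs}(v)+1)\rceil$; comparisons $\texttt{>=},\texttt{<=},\texttt{>},\texttt{<},\texttt{==},\texttt{!=}$ on integers returning booleans; boolean $\texttt{!},\texttt{\&\&},\texttt{||}$. Statements: declaration $t\ x;$; assignment $x=e;$; block $\{s_1\dots s_m\}$; conditional $\mathbf{if}(e)\ s_1\ \mathbf{else}\ s_2$; loop $\mathbf{for}(x<\mathtt{size}(e))\ s$ (loop bounds are always syntactically of the form $\mathtt{size}(e)$). A program is $\mathbf{int\ main}(\mathbf{int}\ x_1,\dots,\mathbf{int}\ x_m)\{s_1\dots s_k\ \mathbf{return}\ e;\}$. Semantics (big-step). A store $\Sigma$ is a finite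 partial map from variables to values; $\Sigma[x\mapsto v]$ is the update. $\Sigma\vdash e\Downarrow v$: a variable $x\in\mathrm{dom}\,\Sigma$ evaluates to $\Sigma(x)$, constants to their value, $\mathtt{op}(e_1,\dots,e_m)$ to $\mathtt{op}$ applied to the values of the $e_i$. $\Sigma\vdash s\Downarrow\Sigma'$: $t\ x;$ gives $\Sigma[x\mapsto 0]$ if $t\in\mathsf{Int}$ and $\Sigma[x\mapsto\#f]$ if $t=\mathtt{bool}$; $x=e;$ (with $x\in\mathrm{dom}\,\Sigma$) gives $\Sigma[x\mapsto v]$ where $\Sigma\vdash e\Downarrow v$; a sequence or block executes its statements in order threading the store (a block returns the final store); a conditional evaluates its guard to a boolean and executes the corresponding branch; $\mathbf{for}(x<e)\ s$ evaluates $e$ once to an integer $i$, sets $\Sigma_0=\Sigma$, executes $s$ from $\Sigma_j[x\mapsto j]$ obtaining $\Sigma_{j+1}$ for $j=0,\dots,i-1$, and ends in $\Sigma_i$ (i.e. in $\Sigma$ if $i\le 0$). A program on inputs $v_1,\dots,v_m$ runs its statements from the store $[x_1\mapsto v_1,\dots,x_m\mapsto v_m]$ and outputs the value of its return expression in the resulting store. Type system. A typing environment $\Gamma$ is a finite partial map from variables to types; $\ell\in\{\#t,\#f\}$ is the loop indicator. Expression typing $\Gamma,\ell\vdash e:t$: a variable $x\in\mathrm{dom}\,\Gamma$ has type $\Gamma(x)$; digit literals have type $\mathtt{iint}$, $\mathtt{true},\mathtt{false}$ have type $\mathtt{bool}$; $\texttt{!},\texttt{\&\&},\texttt{||}$ take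 $\mathtt{bool}$ arguments to $\mathtt{bool}$; comparisons take arguments with types in $\mathsf{Int}$ to $\mathtt{bool}$; $+,-,/,\%$ take arguments with types in $\mathsf{Int}$ to their supremum under $\preccurlyeq$ ($\mathtt{iint}$ iff all arguments are $\mathtt{iint}$); $\mathtt{size}$ takes only an $\mathtt{iint}$ argument, giving $\mathtt{iint}$; parentheses preserve types. Statement typing $\Gamma,\ell\vdash s:\Gamma'$: $t\ x;$ is typable iff $x\notin\mathrm{dom}\,\Gamma$ and not($\ell=\#t$ and $t=\mathtt{iint}$), giving $\Gamma[x\mapsto t]$; $x=e;$ is typable iff $x\in\mathrm{dom}\,\Gamma$, not($\ell=\#t$ and $\Gamma(x)=\mathtt{iint}$), and $\Gamma,\ell\vdash e:t$ with $t,\Gamma(x)$ both in $\mathsf{Int}$ or both $\mathtt{bool}$, giving $\Gamma$; a sequence $s_1\dots s_m$ threads $\Gamma_0=\Gamma$, $\Gamma_{i-1},\ell\vdash s_i:\Gamma_i$, giving $\Gamma_m$; a block $\{\tilde s\}$ is typable if its sequence is, giving $\Gamma$; a conditional needs a guard of type $\mathtt{bool}$ and both branches typable under $\Gamma,\ell$, giving $\Gamma$; $\mathbf{for}(x<e)\ s$ needs $\Gamma,\ell\vdash e:\mathtt{iint}$, $x\notin\mathrm{dom}\,\Gamma$, and $\Gamma[x\mapsto\mathtt{iint}],\#t\vdash s:\Gamma'$ for some $\Gamma'$, giving $\Gamma$. A program is well-typed if its statements are typable starting from $[x_1\mapsto\mathtt{int},\dots,x_m\mapsto\mathtt{int}]$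 with $\ell=\#f$, ending in some $\Gamma'$, and its return expression has a type in $\mathsf{Int}$ under $\Gamma',\#f$. A well-typed program $p$ with one input computes a total function $[\![p]\!]:\mathbb Z\to\mathbb Z$. $\mathrm{sz}(v)=\lceil\log_2(\mathrm{abs}(v)+1)\rceil$ for $v\in\mathbb Z$. *)

theory Defs
  imports Complex_Main
begin

type_synonym vname = string

datatype ty = IInt | TInt | TBool

datatype oper =
    ONeg | OAdd | OSub | ODiv | OMod | OSize
  | OGe | OLe | OGt | OLt | OEq | ONe
  | ONot | OAnd | OOr

datatype expr =
    Var vname
  | NumC nat            \<comment> \<open>nonempty decimal digit string denoting a natural number\<close>
  | TrueC
  | FalseC
  | Op oper "expr list"
  | Paren expr

datatype stmt =
    Decl ty vname
  | Assign vname expr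
  | Block "stmt list"
  | If expr stmt stmt
  | For vname expr stmt   \<comment> \<open>For x e s  stands for  for(x < size(e)) s\<close>

datatype prog = Prog "vname list" "stmt list" expr
  \<comment> \<open>int main(int x1,...,int xm){ s1 ... sk return e; }\<close>

datatype val = IntV int | BoolV bool

definition sz :: "int \<Rightarrow> nat" where
  "sz v = nat \<lceil>log 2 (real_of_int \<bar>v\<bar> + 1)\<rceil>"

text \<open>Integer division / remainder (C convention: truncation toward zero), 0 when dividing by 0.\<close>
definition tdiv :: "int \<Rightarrow> int \<Rightarrow> int" where
  "tdiv a b = (if b = 0 then 0 else sgn a * sgn b * (\<bar>a\<bar> div \<bar>b\<bar>))"

definition tmod :: "int \<Rightarrow> int \<Rightarrow> int" where
  "tmod a b = (if b = 0 then 0 else a - b * tdiv a b)"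

definition int1 :: "(int \<Rightarrow> val) \<Rightarrow> val list \<Rightarrow> val option" where
  "int1 f vs = (case vs of [IntV a] \<Rightarrow> Some (f a) | _ \<Rightarrow> None)"

definition int2 :: "(int \<Rightarrow> int \<Rightarrow> val) \<Rightarrow> val list \<Rightarrow> val option" where
  "int2 f vs = (case vs of [IntV a, IntV b] \<Rightarrow> Some (f a b) | _ \<Rightarrow> None)"

definition bool1 :: "(bool \<Rightarrow> bool) \<Rightarrow> val list \<Rightarrow> val option" where
  "bool1 f vs = (case vs of [BoolV a] \<Rightarrow> Some (BoolV (f a)) | _ \<Rightarrow> None)"

definition bool2 :: "(bool \<Rightarrow> bool \<Rightarrow> bool) \<Rightarrow> val list \<Rightarrow> val option" where
  "bool2 f vs = (case vs of [BoolV a, BoolV b] \<Rightarrow> Some (BoolV (f a b)) | _ \<Rightarrow> None)"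

primrec apply_op :: "oper \<Rightarrow> val list \<Rightarrow> val option" where
  "apply_op ONeg = int1 (\<lambda>a. IntV (- a))"
| "apply_op OAdd = int2 (\<lambda>a b. IntV (a + b))"
| "apply_op OSub = int2 (\<lambda>a b. IntV (a - b))"
| "apply_op ODiv = int2 (\<lambda>a b. IntV (tdiv a b))"
| "apply_op OMod = int2 (\<lambda>a b. IntV (tmod a b))"
| "apply_op OSize = int1 (\<lambda>a. IntV (int (sz a)))"
| "apply_op OGe = int2 (\<lambda>a b. BoolV (a \<ge> b))"
| "apply_op OLe = int2 (\<lambda>a b. BoolV (a \<le> b))"
| "apply_op OGt = int2 (\<lambda>a b. BoolV (a > b))"
| "apply_op OLt = int2 (\<lambda>a b. BoolV (a < b))"
| "apply_op OEq = int2 (\<lambda>a b. BoolV (a = b))"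
| "apply_op ONe = int2 (\<lambda>a b. BoolV (a \<noteq> b))"
| "apply_op ONot = bool1 (\<lambda>a. \<not> a)"
| "apply_op OAnd = bool2 (\<lambda>a b. a \<and> b)"
| "apply_op OOr = bool2 (\<lambda>a b. a \<or> b)"

type_synonym store = "vname \<Rightarrow> val option"

fun eval :: "store \<Rightarrow> expr \<Rightarrow> val option" where
  "eval \<Sigma> (Var x) = \<Sigma> x"
| "eval \<Sigma> (NumC n) = Some (IntV (int n))"
| "eval \<Sigma> TrueC = Some (BoolV True)"
| "eval \<Sigma> FalseC = Some (BoolV False)"
| "eval \<Sigma> (Op f es) = Option.bind (those (map (eval \<Sigma>) es)) (apply_op f)"
| "eval \<Sigma> (Paren e) = eval \<Sigma> e"

definition default_val :: "ty \<Rightarrow> val" where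
  "default_val t = (if t = TBool then BoolV False else IntV 0)"

inductive
  exec  :: "store \<Rightarrow> stmt \<Rightarrow> store \<Rightarrow> bool" and
  execs :: "store \<Rightarrow> stmt list \<Rightarrow> store \<Rightarrow> bool" and
  loop  :: "vname \<Rightarrow> stmt \<Rightarrow> int \<Rightarrow> int \<Rightarrow> store \<Rightarrow> store \<Rightarrow> bool"
where
  ExDecl: "exec \<Sigma> (Decl t x) (\<Sigma>(x \<mapsto> default_val t))"
| ExAssign: "\<lbrakk> x \<in> dom \<Sigma>; eval \<Sigma> e = Some v \<rbrakk> \<Longrightarrow> exec \<Sigma> (Assign x e) (\<Sigma>(x \<mapsto> v))"
| ExBlock: "execs \<Sigma> ss \<Sigma>' \<Longrightarrow> exec \<Sigma> (Block ss) \<Sigma>'"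
| ExIfT: "\<lbrakk> eval \<Sigma> e = Some (BoolV True); exec \<Sigma> s1 \<Sigma>' \<rbrakk> \<Longrightarrow> exec \<Sigma> (If e s1 s2) \<Sigma>'"
| ExIfF: "\<lbrakk> eval \<Sigma> e = Some (BoolV False); exec \<Sigma> s2 \<Sigma>' \<rbrakk> \<Longrightarrow> exec \<Sigma> (If e s1 s2) \<Sigma>'"
| ExFor: "\<lbrakk> eval \<Sigma> (Op OSize [e]) = Some (IntV i); loop x s 0 i \<Sigma> \<Sigma>' \<rbrakk>
          \<Longrightarrow> exec \<Sigma> (For x e s) \<Sigma>'"
| ExsNil: "execs \<Sigma> [] \<Sigma>"
| ExsCons: "\<lbrakk> exec \<Sigma> s \<Sigma>1; execs \<Sigma>1 ss \<Sigma>' \<rbrakk> \<Longrightarrow> execs \<Sigma> (s # ss) \<Sigma>'"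
| LoopEnd: "i \<le> j \<Longrightarrow> loop x s j i \<Sigma> \<Sigma>"
| LoopStep: "\<lbrakk> j < i; exec (\<Sigma>(x \<mapsto> IntV j)) s \<Sigma>1; loop x s (j + 1) i \<Sigma>1 \<Sigma>' \<rbrakk>
             \<Longrightarrow> loop x s j i \<Sigma> \<Sigma>'"

fun run :: "prog \<Rightarrow> int list \<Rightarrow> int \<Rightarrow> bool" where
  "run (Prog xs ss e) vs r =
     (length vs = length xs \<and>
      (\<exists>\<Sigma>'. execs (map_of (zip xs (map IntV vs))) ss \<Sigma>' \<and> eval \<Sigma>' e = Some (IntV r)))"

type_synonym tenv = "vname \<Rightarrow> ty option"

definition is_int_ty :: "ty \<Rightarrow> bool" where
  "is_int_ty t \<longleftrightarrow> t = IInt \<or> t = TInt"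

definition ty_sup :: "ty \<Rightarrow> ty \<Rightarrow> ty" where
  "ty_sup a b = (if a = IInt \<and> b = IInt then IInt else TInt)"

definition arith_ty :: "ty list \<Rightarrow> ty option" where
  "arith_ty ts = (case ts of [a, b] \<Rightarrow> (if is_int_ty a \<and> is_int_ty b then Some (ty_sup a b) else None)
                            | _ \<Rightarrow> None)"

definition cmp_ty :: "ty list \<Rightarrow> ty option" where
  "cmp_ty ts = (case ts of [a, b] \<Rightarrow> (if is_int_ty a \<and> is_int_ty b then Some TBool else None)
                          | _ \<Rightarrow> None)"

definition bool_ty :: "ty list \<Rightarrow> ty option" where
  "bool_ty ts = (if ts = [TBool, TBool] then Some TBool else None)"

primrec ty_op :: "oper \<Rightarrow> ty list \<Rightarrow> ty option" where
  "ty_op ONeg ts = (case ts of [a] \<Rightarrow> (if is_int_ty a then Some a else None) | _ \<Rightarrow> None)"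
| "ty_op OAdd ts = arith_ty ts"
| "ty_op OSub ts = arith_ty ts"
| "ty_op ODiv ts = arith_ty ts"
| "ty_op OMod ts = arith_ty ts"
| "ty_op OSize ts = (if ts = [IInt] then Some IInt else None)"
| "ty_op OGe ts = cmp_ty ts"
| "ty_op OLe ts = cmp_ty ts"
| "ty_op OGt ts = cmp_ty ts"
| "ty_op OLt ts = cmp_ty ts"
| "ty_op OEq ts = cmp_ty ts"
| "ty_op ONe ts = cmp_ty ts"
| "ty_op ONot ts = (if ts = [TBool] then Some TBool else None)"
| "ty_op OAnd ts = bool_ty ts"
| "ty_op OOr ts = bool_ty ts"

text \<open>Expression typing; the loop indicator does not influence expression typing.\<close>
fun tyE :: "tenv \<Rightarrow> bool \<Rightarrow> expr \<Rightarrow> ty option" where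
  "tyE \<Gamma> l (Var x) = \<Gamma> x"
| "tyE \<Gamma> l (NumC n) = Some IInt"
| "tyE \<Gamma> l TrueC = Some TBool"
| "tyE \<Gamma> l FalseC = Some TBool"
| "tyE \<Gamma> l (Op f es) = Option.bind (those (map (tyE \<Gamma> l) es)) (ty_op f)"
| "tyE \<Gamma> l (Paren e) = tyE \<Gamma> l e"

definition compat :: "ty \<Rightarrow> ty \<Rightarrow> bool" where
  "compat a b \<longleftrightarrow> (is_int_ty a \<and> is_int_ty b) \<or> (a = TBool \<and> b = TBool)"

inductive
  wtS  :: "tenv \<Rightarrow> bool \<Rightarrow> stmt \<Rightarrow> tenv \<Rightarrow> bool" and
  wtSs :: "tenv \<Rightarrow> bool \<Rightarrow> stmt list \<Rightarrow> tenv \<Rightarrow> bool"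
where
  WtDecl: "\<lbrakk> x \<notin> dom \<Gamma>; \<not> (l \<and> t = IInt) \<rbrakk> \<Longrightarrow> wtS \<Gamma> l (Decl t x) (\<Gamma>(x \<mapsto> t))"
| WtAssign: "\<lbrakk> \<Gamma> x = Some tx; \<not> (l \<and> tx = IInt); tyE \<Gamma> l e = Some t; compat t tx \<rbrakk>
             \<Longrightarrow> wtS \<Gamma> l (Assign x e) \<Gamma>"
| WtBlock: "wtSs \<Gamma> l ss \<Gamma>' \<Longrightarrow> wtS \<Gamma> l (Block ss) \<Gamma>"
| WtIf: "\<lbrakk> tyE \<Gamma> l e = Some TBool; wtS \<Gamma> l s1 \<Gamma>1; wtS \<Gamma> l s2 \<Gamma>2 \<rbrakk>
         \<Longrightarrow> wtS \<Gamma> l (If e s1 s2) \<Gamma>"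
| WtFor: "\<lbrakk> tyE \<Gamma> l (Op OSize [e]) = Some IInt; x \<notin> dom \<Gamma>; wtS (\<Gamma>(x \<mapsto> IInt)) True s \<Gamma>' \<rbrakk>
          \<Longrightarrow> wtS \<Gamma> l (For x e s) \<Gamma>"
| WtsNil: "wtSs \<Gamma> l [] \<Gamma>"
| WtsCons: "\<lbrakk> wtS \<Gamma> l s \<Gamma>1; wtSs \<Gamma>1 l ss \<Gamma>' \<rbrakk> \<Longrightarrow> wtSs \<Gamma> l (s # ss) \<Gamma>'"

fun well_typed :: "prog \<Rightarrow> bool" where
  "well_typed (Prog xs ss e) =
     (distinct xs \<and>
      (\<exists>\<Gamma>' t. wtSs (map_of (map (\<lambda>x. (x, TInt)) xs)) False ss \<Gamma>' \<and>
              tyE \<Gamma>' False e = Some t \<and> is_int_ty t))"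

definition reserved_words :: "string list" where
  "reserved_words = [''iint'', ''int'', ''bool'', ''true'', ''false'', ''size'', ''if'', ''else'',
               ''for'', ''return'', ''main'']"

definition is_letter :: "char \<Rightarrow> bool" where
  "is_letter c \<longleftrightarrow> c \<in> set (''abcdefghijklmnopqrstuvwxyzABCDEFGHIJKLMNOPQRSTUVWXYZ_'')"

definition is_digit :: "char \<Rightarrow> bool" where
  "is_digit c \<longleftrightarrow> c \<in> set ''0123456789''"

definition valid_ident :: "vname \<Rightarrow> bool" where
  "valid_ident x \<longleftrightarrow> x \<noteq> [] \<and> is_letter (hd x) \<and> (\<forall>c\<in>set x. is_letter c \<or> is_digit c)
                     \<and> x \<notin> set reserved_words"

fun idents_e :: "expr \<Rightarrow> vname list" where
  "idents_e (Var x) = [x]"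
| "idents_e (Op f es) = concat (map idents_e es)"
| "idents_e (Paren e) = idents_e e"
| "idents_e _ = []"

fun idents_s :: "stmt \<Rightarrow> vname list" where
  "idents_s (Decl t x) = [x]"
| "idents_s (Assign x e) = x # idents_e e"
| "idents_s (Block ss) = concat (map idents_s ss)"
| "idents_s (If e s1 s2) = idents_e e @ idents_s s1 @ idents_s s2"
| "idents_s (For x e s) = x # idents_e e @ idents_s s"

fun idents_p :: "prog \<Rightarrow> vname list" where
  "idents_p (Prog xs ss e) = xs @ concat (map idents_s ss) @ idents_e e"

definition wf_idents :: "prog \<Rightarrow> bool" where
  "wf_idents p \<longleftrightarrow> (\<forall>x\<in>set (idents_p p). valid_ident x)"

fun dec_str :: "nat \<Rightarrow> string" where
  "dec_str n = (if n < 10 then [''0123456789'' ! n] else dec_str (n div 10) @ [''0123456789'' ! (n mod 10)])"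

fun show_ty :: "ty \<Rightarrow> string" where
  "show_ty IInt = ''iint''"
| "show_ty TInt = ''int''"
| "show_ty TBool = ''bool''"

fun show_op :: "oper \<Rightarrow> string" where
  "show_op ONeg = ''-''" | "show_op OAdd = ''+''" | "show_op OSub = ''-''"
| "show_op ODiv = ''/''" | "show_op OMod = ''%''" | "show_op OSize = ''size''"
| "show_op OGe = ''>=''" | "show_op OLe = ''<=''" | "show_op OGt = ''>''"
| "show_op OLt = ''<''" | "show_op OEq = ''==''" | "show_op ONe = ''!=''"
| "show_op ONot = ''!''" | "show_op OAnd = ''&&''" | "show_op OOr = ''||''"

definition sep_by :: "string \<Rightarrow> string list \<Rightarrow> string" where
  "sep_by s xs = concat (case xs of [] \<Rightarrow> [] | y # ys \<Rightarrow> y # map (\<lambda>z. s @ z) ys)"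

fun show_e :: "expr \<Rightarrow> string" where
  "show_e (Var x) = x"
| "show_e (NumC n) = dec_str n"
| "show_e TrueC = ''true''"
| "show_e FalseC = ''false''"
| "show_e (Op f es) = show_op f @ ''('' @ sep_by '','' (map show_e es) @ '')''"
| "show_e (Paren e) = ''('' @ show_e e @ '')''"

fun show_s :: "stmt \<Rightarrow> string" where
  "show_s (Decl t x) = show_ty t @ '' '' @ x @ '';''"
| "show_s (Assign x e) = x @ ''='' @ show_e e @ '';''"
| "show_s (Block ss) = ''{'' @ concat (map show_s ss) @ ''}''"
| "show_s (If e s1 s2) = ''if('' @ show_e e @ '')'' @ show_s s1 @ ''else '' @ show_s s2"
| "show_s (For x e s) = ''for('' @ x @ ''<size('' @ show_e e @ ''))'' @ show_s s"

fun show_p :: "prog \<Rightarrow> string" where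
  "show_p (Prog xs ss e) =
     ''int main('' @ sep_by '','' (map (\<lambda>x. ''int '' @ x) xs) @ ''){''
     @ concat (map show_s ss) @ ''return '' @ show_e e @ '';}''"

definition prog_length :: "prog \<Rightarrow> nat" where
  "prog_length p = length (show_p p)"

fun arity :: "prog \<Rightarrow> nat" where
  "arity (Prog xs ss e) = length xs"

end

theory Submission
  imports Defs
begin

text \<open>
  The witness program copies its input v into an iint variable y, so that y may bound loops,
  and runs d nested loops for(i<size(y)) around a block of d assignments r = r + r + 1.
  The block is executed sz(v)^d times, so r is doubled-and-incremented d * sz(v)^d times,
  starting from 0, and ends as 2^(d * sz(v)^d) - 1, whose size is d * sz(v)^d.
  The loop variables i0, ..., i(d-1) must be distinct; their names have O(log d) characters,
  which gives the O(d log d) bound on the program text.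
\<close>

declare dec_str.simps [simp del]

lemma dec_str_not_Nil: "dec_str n \<noteq> []"
  by (subst dec_str.simps) auto

lemma digit_nth_mem: "m < 10 \<Longrightarrow> ''0123456789'' ! m \<in> set ''0123456789''"
  by (rule nth_mem) simp

lemma set_dec_str_subset_digits: "set (dec_str n) \<subseteq> set ''0123456789''"
proof (induction n rule: dec_str.induct)
  case (1 n)
  then show ?case
    using digit_nth_mem[of n] digit_nth_mem[of "n mod 10"]
    by (subst dec_str.simps) auto
qed

definition decimal_value :: "string \<Rightarrow> nat" where
  "decimal_value s = foldl (\<lambda>a c. 10 * a + (of_char c - 48)) 0 s"

lemma of_char_digit: "m < 10 \<Longrightarrow> (of_char (''0123456789'' ! m) :: nat) - 48 = m"
proof -
  assume "m < 10"
  then have "m \<in> {0, 1, 2, 3, 4, 5, 6, 7, 8, 9}" by auto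
  then show ?thesis by auto
qed

lemma decimal_value_dec_str: "decimal_value (dec_str n) = n"
proof (induction n rule: dec_str.induct)
  case (1 n)
  then show ?case
    by (subst dec_str.simps) (simp add: decimal_value_def of_char_digit)
qed

lemma dec_str_inject: "dec_str m = dec_str n \<longleftrightarrow> m = n"
  by (metis decimal_value_dec_str)

lemma two_power_length_dec_str_le: "2 ^ length (dec_str n) \<le> 2 * n + 2"
proof (induction n rule: dec_str.induct)
  case (1 n)
  show ?case
  proof (cases "n < 10")
    case True
    then show ?thesis by (subst dec_str.simps) simp
  next
    case False
    then have "2 ^ length (dec_str n) = 2 * 2 ^ length (dec_str (n div 10))"
      by (subst dec_str.simps) simp
    also have "\<dots> \<le> 2 * (2 * (n div 10) + 2)" using 1 False by simp
    also have "\<dots> \<le> 2 * n + 2" using False by presburger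
    finally show ?thesis .
  qed
qed

lemma length_dec_str_le_log:
  assumes "n < d"
  shows "real (length (dec_str n)) \<le> 1 + log 2 (real d)"
proof -
  have "2 ^ length (dec_str n) \<le> 2 * d"
    using two_power_length_dec_str_le[of n] assms by linarith
  then have "real (length (dec_str n)) \<le> log 2 (real (2 * d))"
    by (rule le_log2_of_power)
  also have "\<dots> = 1 + log 2 (real d)" using assms by (simp add: log_mult)
  finally show ?thesis .
qed

lemma execs_replicate:
  assumes step: "\<And>m \<Sigma>. P m \<Sigma> \<Longrightarrow> \<exists>\<Sigma>'. exec \<Sigma> s \<Sigma>' \<and> P (Suc m) \<Sigma>'"
  shows "P m \<Sigma> \<Longrightarrow> \<exists>\<Sigma>'. execs \<Sigma> (replicate t s) \<Sigma>' \<and> P (m + t) \<Sigma>'"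
proof (induction t arbitrary: m \<Sigma>)
  case 0
  then show ?case by (auto intro: ExsNil)
next
  case (Suc t)
  obtain \<Sigma>1 where "exec \<Sigma> s \<Sigma>1" "P (Suc m) \<Sigma>1"
    using step[OF Suc.prems] by blast
  moreover obtain \<Sigma>' where "execs \<Sigma>1 (replicate t s) \<Sigma>'" "P (Suc m + t) \<Sigma>'"
    using Suc.IH[OF \<open>P (Suc m) \<Sigma>1\<close>] by blast
  ultimately show ?case by (auto intro: ExsCons)
qed

lemma loop_iterate:
  assumes body: "\<And>m \<Sigma> j. P m \<Sigma> \<Longrightarrow> \<exists>\<Sigma>'. exec (\<Sigma>(x \<mapsto> IntV j)) s \<Sigma>' \<and> P (m + K) \<Sigma>'"
  shows "P m \<Sigma> \<Longrightarrow> \<exists>\<Sigma>'. loop x s j (j + int t) \<Sigma> \<Sigma>' \<and> P (m + K * t) \<Sigma>'"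
proof (induction t arbitrary: m \<Sigma> j)
  case 0
  then show ?case by (auto intro: LoopEnd)
next
  case (Suc t)
  obtain \<Sigma>1 where first: "exec (\<Sigma>(x \<mapsto> IntV j)) s \<Sigma>1" "P (m + K) \<Sigma>1"
    using body[OF Suc.prems] by blast
  obtain \<Sigma>' where rest: "loop x s (j + 1) (j + 1 + int t) \<Sigma>1 \<Sigma>'" "P (m + K + K * t) \<Sigma>'"
    using Suc.IH[OF first(2)] by blast
  have "loop x s j (j + int (Suc t)) \<Sigma> \<Sigma>'"
    using LoopStep[OF _ first(1)] rest(1) by (simp add: add.assoc)
  then show ?case using rest(2) by (auto simp: add.assoc)
qed

definition loop_var :: "nat \<Rightarrow> vname" where
  "loop_var k = ''i'' @ dec_str k"

definition double_incr :: stmt where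
  "double_incr = Assign ''r'' (Op OAdd [Op OAdd [Var ''r'', Var ''r''], NumC 1])"

definition doubling_block :: "nat \<Rightarrow> stmt" where
  "doubling_block d = Block (replicate d double_incr)"

primrec nest_loops :: "nat \<Rightarrow> stmt \<Rightarrow> stmt" where
  "nest_loops 0 s = s"
| "nest_loops (Suc k) s = For (loop_var k) (Var ''y'') (nest_loops k s)"

definition power_prog :: "nat \<Rightarrow> prog" where
  "power_prog d =
     Prog [''x'']
       [Decl IInt ''y'', Assign ''y'' (Var ''x''), Decl TInt ''r'',
        nest_loops d (doubling_block d)]
       (Var ''r'')"

lemma loop_var_inject: "loop_var m = loop_var n \<longleftrightarrow> m = n"
  by (simp add: loop_var_def dec_str_inject)

lemma loop_var_neq: "loop_var k \<noteq> ''x''" "loop_var k \<noteq> ''y''" "loop_var k \<noteq> ''r''"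
  unfolding loop_var_def using dec_str_not_Nil[of k] by auto

definition counter_state :: "int \<Rightarrow> nat \<Rightarrow> store \<Rightarrow> bool" where
  "counter_state v m \<Sigma> \<longleftrightarrow> \<Sigma> ''y'' = Some (IntV v) \<and> \<Sigma> ''r'' = Some (IntV (2 ^ m - 1))"

lemma exec_double_incr:
  assumes "counter_state v m \<Sigma>"
  shows "\<exists>\<Sigma>'. exec \<Sigma> double_incr \<Sigma>' \<and> counter_state v (Suc m) \<Sigma>'"
proof -
  let ?\<Sigma>' = "\<Sigma>(''r'' \<mapsto> IntV (2 ^ Suc m - 1))"
  have "exec \<Sigma> double_incr ?\<Sigma>'"
    unfolding double_incr_def
    by (rule ExAssign) (use assms in \<open>auto simp: counter_state_def int2_def\<close>)
  moreover have "counter_state v (Suc m) ?\<Sigma>'"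
    using assms by (simp add: counter_state_def)
  ultimately show ?thesis by blast
qed

lemma exec_doubling_block:
  assumes "counter_state v m \<Sigma>"
  shows "\<exists>\<Sigma>'. exec \<Sigma> (doubling_block d) \<Sigma>' \<and> counter_state v (m + d) \<Sigma>'"
proof -
  obtain \<Sigma>' where "execs \<Sigma> (replicate d double_incr) \<Sigma>'" "counter_state v (m + d) \<Sigma>'"
    using execs_replicate[of "counter_state v", OF exec_double_incr assms] by blast
  then show ?thesis by (auto simp: doubling_block_def intro: ExBlock)
qed

lemma exec_nest_loops:
  assumes body: "\<And>m \<Sigma>. counter_state v m \<Sigma> \<Longrightarrow> \<exists>\<Sigma>'. exec \<Sigma> s \<Sigma>' \<and> counter_state v (m + K) \<Sigma>'"
  shows "counter_state v m \<Sigma> \<Longrightarrow>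
    \<exists>\<Sigma>'. exec \<Sigma> (nest_loops k s) \<Sigma>' \<and> counter_state v (m + K * sz v ^ k) \<Sigma>'"
proof (induction k arbitrary: m \<Sigma>)
  case 0
  then show ?case using body by simp
next
  case (Suc k)
  have bound: "eval \<Sigma> (Op OSize [Var ''y'']) = Some (IntV (int (sz v)))"
    using Suc.prems by (simp add: counter_state_def int1_def)
  have "counter_state v m (\<Sigma>(loop_var k \<mapsto> IntV j)) \<longleftrightarrow> counter_state v m \<Sigma>" for m \<Sigma> j
    using loop_var_neq[of k] by (auto simp: counter_state_def)
  then obtain \<Sigma>' where "loop (loop_var k) (nest_loops k s) 0 (0 + int (sz v)) \<Sigma> \<Sigma>'"
      "counter_state v (m + K * sz v ^ k * sz v) \<Sigma>'"
    using loop_iterate[of "counter_state v"] Suc by metis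
  then show ?case
    using ExFor[OF bound] by (auto simp: mult_ac)
qed

lemma run_power_prog: "run (power_prog d) [v] (2 ^ (d * sz v ^ d) - 1)"
proof -
  let ?\<Sigma>0 = "map_of (zip [''x''] (map IntV [v]))"
  let ?\<Sigma>1 = "?\<Sigma>0(''y'' \<mapsto> default_val IInt)"
  let ?\<Sigma>2 = "?\<Sigma>1(''y'' \<mapsto> IntV v)"
  let ?\<Sigma>3 = "?\<Sigma>2(''r'' \<mapsto> default_val TInt)"
  have assign: "exec ?\<Sigma>1 (Assign ''y'' (Var ''x'')) ?\<Sigma>2"
    by (rule ExAssign) auto
  have "counter_state v 0 ?\<Sigma>3" by (simp add: counter_state_def default_val_def)
  then obtain \<Sigma>' where loops: "exec ?\<Sigma>3 (nest_loops d (doubling_block d)) \<Sigma>'"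
      and final: "counter_state v (d * sz v ^ d) \<Sigma>'"
    using exec_nest_loops[of v, OF exec_doubling_block] by fastforce
  have "execs ?\<Sigma>0
      [Decl IInt ''y'', Assign ''y'' (Var ''x''), Decl TInt ''r'',
       nest_loops d (doubling_block d)] \<Sigma>'"
    by (intro ExsCons[OF ExDecl] ExsCons[OF assign] ExsCons[OF ExDecl] ExsCons[OF loops] ExsNil)
  with final show ?thesis
    unfolding power_prog_def by (auto simp: counter_state_def)
qed

lemma sz_two_power_minus_one: "sz (2 ^ k - 1) = k"
proof -
  have "real_of_int \<bar>2 ^ k - 1\<bar> + 1 = 2 ^ k" by simp
  then show ?thesis unfolding sz_def by simp
qed

lemma wtS_doubling_block: "\<Gamma> ''r'' = Some TInt \<Longrightarrow> wtS \<Gamma> l (doubling_block d) \<Gamma>"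
proof -
  assume r: "\<Gamma> ''r'' = Some TInt"
  have "wtS \<Gamma> l double_incr \<Gamma>"
    unfolding double_incr_def
    by (rule WtAssign[where t = TInt])
      (use r in \<open>auto simp: arith_ty_def is_int_ty_def ty_sup_def compat_def\<close>)
  then have "wtSs \<Gamma> l (replicate d double_incr) \<Gamma>"
    by (induction d) (auto intro: WtsNil WtsCons)
  then show ?thesis unfolding doubling_block_def by (rule WtBlock)
qed

lemma wtS_nest_loops:
  assumes body: "\<And>\<Gamma> l. \<Gamma> ''r'' = Some TInt \<Longrightarrow> wtS \<Gamma> l s \<Gamma>"
  shows "\<lbrakk>\<Gamma> ''y'' = Some IInt; \<Gamma> ''r'' = Some TInt; \<forall>j<k. loop_var j \<notin> dom \<Gamma>\<rbrakk>
    \<Longrightarrow> wtS \<Gamma> l (nest_loops k s) \<Gamma>"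
proof (induction k arbitrary: \<Gamma> l)
  case 0
  then show ?case using body by simp
next
  case (Suc k)
  have "wtS (\<Gamma>(loop_var k \<mapsto> IInt)) True (nest_loops k s) (\<Gamma>(loop_var k \<mapsto> IInt))"
    using Suc.prems loop_var_neq loop_var_inject by (intro Suc.IH) (auto simp: domIff less_Suc_eq)
  then show ?case
    using Suc.prems by (auto intro!: WtFor)
qed

lemma well_typed_power_prog: "well_typed (power_prog d)"
proof -
  let ?\<Gamma>0 = "map_of (map (\<lambda>x. (x, TInt)) [''x''])"
  let ?\<Gamma>1 = "?\<Gamma>0(''y'' \<mapsto> IInt)"
  let ?\<Gamma>2 = "?\<Gamma>1(''r'' \<mapsto> TInt)"
  have "wtS ?\<Gamma>0 False (Decl IInt ''y'') ?\<Gamma>1" by (rule WtDecl) auto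
  moreover have "wtS ?\<Gamma>1 False (Assign ''y'' (Var ''x'')) ?\<Gamma>1"
    by (rule WtAssign) (auto simp: compat_def is_int_ty_def)
  moreover have "wtS ?\<Gamma>1 False (Decl TInt ''r'') ?\<Gamma>2" by (rule WtDecl) auto
  moreover have "wtS ?\<Gamma>2 False (nest_loops d (doubling_block d)) ?\<Gamma>2"
    by (rule wtS_nest_loops[OF wtS_doubling_block]) (auto simp: loop_var_neq)
  ultimately have "wtSs ?\<Gamma>0 False
      [Decl IInt ''y'', Assign ''y'' (Var ''x''), Decl TInt ''r'',
       nest_loops d (doubling_block d)] ?\<Gamma>2"
    by (blast intro: WtsCons WtsNil)
  then show ?thesis unfolding power_prog_def by (auto simp: is_int_ty_def)
qed

lemma reserved_words_no_digit: "\<forall>w\<in>set reserved_words. \<forall>c\<in>set w. \<not> is_digit c"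
  by (simp add: reserved_words_def is_digit_def)

lemma valid_ident_loop_var: "valid_ident (loop_var k)"
proof -
  have digit: "is_digit c" if "c \<in> set (dec_str k)" for c
    using set_dec_str_subset_digits that unfolding is_digit_def by blast
  have letter_i: "is_letter (CHR ''i'')" by (simp add: is_letter_def)
  have "\<forall>c\<in>set (loop_var k). is_letter c \<or> is_digit c"
    using digit letter_i by (simp add: loop_var_def)
  moreover have "loop_var k \<notin> set reserved_words"
  proof
    assume "loop_var k \<in> set reserved_words"
    moreover have "hd (dec_str k) \<in> set (loop_var k)"
      using dec_str_not_Nil[of k] by (simp add: loop_var_def)
    ultimately show False
      using reserved_words_no_digit digit dec_str_not_Nil[of k] by (meson hd_in_set)
  qed
  ultimately show ?thesis
    using letter_i by (simp add: valid_ident_def loop_var_def)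
qed

lemma set_idents_nest_loops:
  "set (idents_s (nest_loops k s)) \<subseteq> range loop_var \<union> {''y''} \<union> set (idents_s s)"
  by (induction k) auto

lemma wf_idents_power_prog: "wf_idents (power_prog d)"
proof -
  have "set (idents_s (doubling_block d)) \<subseteq> {''r''}"
    by (auto simp: doubling_block_def double_incr_def)
  then have "set (idents_p (power_prog d)) \<subseteq> range loop_var \<union> {''x'', ''y'', ''r''}"
    using set_idents_nest_loops[of d "doubling_block d"]
    by (simp add: power_prog_def) blast
  moreover have "valid_ident ''x''" "valid_ident ''y''" "valid_ident ''r''"
    by (simp_all add: valid_ident_def is_letter_def reserved_words_def)
  ultimately show ?thesis
    unfolding wf_idents_def using valid_ident_loop_var by blast
qed

lemma length_show_nest_loops:
  "length (show_s (nest_loops k s)) = length (show_s s) + (\<Sum>j<k. 14 + length (dec_str j))"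
  by (induction k) (auto simp: loop_var_def)

text \<open>The fixed text int main(int x){iint y;y=x;int r; ... return r;} together with the braces
  of the block has 45 characters, each r=+(+(r,r),1); has 14, and each header for(ik<size(y)),
  with k written in decimal, has 14 + length (dec_str k).\<close>

lemma prog_length_power_prog:
  "prog_length (power_prog d) = 45 + 14 * d + (\<Sum>j<d. 14 + length (dec_str j))"
proof -
  have "length (show_s double_incr) = 14"
    by (simp add: double_incr_def sep_by_def dec_str.simps)
  then have "length (show_s (doubling_block d)) = 2 + 14 * d"
    by (simp add: doubling_block_def length_concat sum_list_replicate)
  then show ?thesis
    by (simp add: prog_length_def power_prog_def length_show_nest_loops sep_by_def)
qed

lemma prog_length_power_prog_le:
  assumes "d \<ge> 1"
  shows "real (prog_length (power_prog d)) \<le> 100 * real d * (1 + log 2 (real d))"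
proof -
  let ?L = "log 2 (real d)"
  have "(\<Sum>j<d. real (length (dec_str j))) \<le> real (card {..<d}) * (1 + ?L)"
    by (rule sum_bounded_above) (simp add: length_dec_str_le_log)
  then have "real (prog_length (power_prog d)) \<le> 45 + 28 * real d + real d * (1 + ?L)"
    by (simp add: prog_length_power_prog sum.distrib)
  also have "\<dots> \<le> 100 * real d * (1 + ?L)"
  proof -
    have "0 \<le> real d * ?L" "1 \<le> real d" using assms by simp_all
    then show ?thesis by (simp only: distrib_left mult.assoc mult_1_right)
  qed
  finally show ?thesis .
qed

theorem lemma8:
  shows "\<exists>C::real. \<forall>d::nat. d \<ge> 1 \<longrightarrow>
           (\<exists>p. wf_idents p \<and> well_typed p \<and> arity p = 1 \<and>
                real (prog_length p) \<le> C * real d * (1 + log 2 (real d)) \<and>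
                (\<forall>v::int. \<exists>r. run p [v] r \<and> sz r = d * sz v ^ d))"
proof (intro exI[of _ 100] allI impI)
  fix d :: nat
  assume "d \<ge> 1"
  have "\<forall>v. \<exists>r. run (power_prog d) [v] r \<and> sz r = d * sz v ^ d"
    using run_power_prog sz_two_power_minus_one by blast
  moreover have "arity (power_prog d) = 1" by (simp add: power_prog_def)
  ultimately show "\<exists>p. wf_idents p \<and> well_typed p \<and> arity p = 1 \<and>
      real (prog_length p) \<le> 100 * real d * (1 + log 2 (real d)) \<and>
      (\<forall>v. \<exists>r. run p [v] r \<and> sz r = d * sz v ^ d)"
    using wf_idents_power_prog well_typed_power_prog prog_length_power_prog_le[OF \<open>d \<ge> 1\<close>]
    by blast
qed

end
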